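(* If $\Omega$ is an I-thick domain in $\mathbb{R}^n$ and $\partial\Omega$ satisfies the ball condition, then $\Omega$ is interior regular.
   Context: A domain is a non-empty open set; proper if $\ne\mathbb{R}^n$. $\mathcal{Q}(S)$ denotes the open axis-parallel cubes contained in $S$, $l(Q)$ the edge length. A proper domain $\Omega$ is I-thick if for any $c_1,c_2,c_3,c_4>0$ and $j_0\in\mathbb{N}$ there are $c_5,c_6,c_7,c_8>0$ such that for every $j\ge j_0$ and every $Q^e\in\mathcal{Q}(\Omega^c)$ with $c_12^{-j}\le l(Q^e)\le c_22^{-j}$ and $c_32^{-j}\le\operatorname{dist}(Q^e,\partial\Omega)\le c_42^{-j}$ there is $Q^i\in\mathcal{Q}(\Omega)$ with $c_52^{-j}\le l(Q^i)\le c_62^{-j}$ and $c_72^{-j}\le\operatorname{dist}(Q^i,\partial\Omega)\le\operatorname{dist}(Q^e,Q^i)\le c_82^{-j}$. A non-empty closed $S\subset\mathbb{R}^n$ satisfies the ball condition if there is $\eta\in(0,1)$ such that for every ball $B(x,r)$ with $x\in S$ and $r\in(0,1)$ there is a ball $B(y,\eta r)\subset B(x,r)$ with $B(y,\eta r)\cap S=\emptyset$. A domain $\Omega$ is interior regular if there is $c>0$ such that $|\Omega\cap Q|\ge c|Q|$ for every cube $Q$ with side length at most $1$ centred at a point of $\partial\Omega$. *)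

theory Defs
  imports "HOL-Analysis.Analysis"
begin

definition domain :: "'a::euclidean_space set \<Rightarrow> bool" where
  "domain \<Omega> \<longleftrightarrow> open \<Omega> \<and> \<Omega> \<noteq> {}"

definition proper_domain :: "'a::euclidean_space set \<Rightarrow> bool" where
  "proper_domain \<Omega> \<longleftrightarrow> domain \<Omega> \<and> \<Omega> \<noteq> UNIV"

definition is_cube :: "'a::euclidean_space set \<Rightarrow> real \<Rightarrow> bool" where
  "is_cube Q l \<longleftrightarrow> l > 0 \<and> (\<exists>a. Q = box a (a + l *\<^sub>R One))"

definition I_thick :: "'a::euclidean_space set \<Rightarrow> bool" where
  "I_thick \<Omega> \<longleftrightarrow> proper_domain \<Omega> \<and>
    (\<forall>c1 c2 c3 c4 :: real. c1 > 0 \<longrightarrow> c2 > 0 \<longrightarrow> c3 > 0 \<longrightarrow> c4 > 0 \<longrightarrow>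
     (\<forall>j0::nat. \<exists>c5 c6 c7 c8 :: real. c5 > 0 \<and> c6 > 0 \<and> c7 > 0 \<and> c8 > 0 \<and>
       (\<forall>j::nat. j \<ge> j0 \<longrightarrow>
         (\<forall>Qe le. is_cube Qe le \<and> Qe \<subseteq> - \<Omega> \<and>
             c1 / 2^j \<le> le \<and> le \<le> c2 / 2^j \<and>
             c3 / 2^j \<le> setdist Qe (frontier \<Omega>) \<and> setdist Qe (frontier \<Omega>) \<le> c4 / 2^j \<longrightarrow>
           (\<exists>Qi li. is_cube Qi li \<and> Qi \<subseteq> \<Omega> \<and>
             c5 / 2^j \<le> li \<and> li \<le> c6 / 2^j \<and>
             c7 / 2^j \<le> setdist Qi (frontier \<Omega>) \<and>
             setdist Qi (frontier \<Omega>) \<le> setdist Qe Qi \<and>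
             setdist Qe Qi \<le> c8 / 2^j)))))"

definition ball_condition :: "'a::euclidean_space set \<Rightarrow> bool" where
  "ball_condition S \<longleftrightarrow> S \<noteq> {} \<and> closed S \<and>
    (\<exists>\<eta>::real. 0 < \<eta> \<and> \<eta> < 1 \<and>
      (\<forall>x\<in>S. \<forall>r::real. 0 < r \<and> r < 1 \<longrightarrow>
         (\<exists>y. ball y (\<eta> * r) \<subseteq> ball x r \<and> ball y (\<eta> * r) \<inter> S = {})))"

definition centred_cube :: "'a::euclidean_space \<Rightarrow> real \<Rightarrow> 'a set" where
  "centred_cube x l = box (x - (l/2) *\<^sub>R One) (x + (l/2) *\<^sub>R One)"

definition interior_regular :: "'a::euclidean_space set \<Rightarrow> bool" where
  "interior_regular \<Omega> \<longleftrightarrow> domain \<Omega> \<and>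
    (\<exists>c::real. c > 0 \<and>
      (\<forall>x\<in>frontier \<Omega>. \<forall>l::real. 0 < l \<and> l \<le> 1 \<longrightarrow>
         measure lebesgue (\<Omega> \<inter> centred_cube x l) \<ge> c * measure lebesgue (centred_cube x l)))"

end

theory Submission
  imports Defs
begin

text \<open>
  Fix a boundary point \<open>x\<close> and a small scale \<open>r\<close>. The ball condition yields a ball of radius
  \<open>\<eta> r\<close> inside \<open>B(x, r)\<close> that misses \<open>\<partial>\<Omega>\<close>, hence lies entirely in \<open>\<Omega>\<close> or entirely in its
  complement. In the first case a cube inscribed in it is a cube of side comparable to \<open>r\<close>
  in \<open>\<Omega>\<close> near \<open>x\<close>. In the second case the inscribed cube is an exterior cube whose side and
  distance to \<open>\<partial>\<Omega>\<close> are comparable to the dyadic scale \<open>2\<^sup>-\<^sup>j \<approx> r\<close>, so I-thickness provides an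
  interior cube of side comparable to \<open>r\<close> at distance \<open>O(r)\<close> from it. Either way the cube of
  side \<open>l \<approx> r\<close> centred at \<open>x\<close> contains a cube in \<open>\<Omega>\<close> of volume \<open>\<ge> c l\<^sup>n\<close>.
\<close>

lemma centred_cube_eq_box:
  "centred_cube x l = box (x - (l/2) *\<^sub>R One) ((x - (l/2) *\<^sub>R One) + l *\<^sub>R One)"
proof -
  have "x - (l/2) *\<^sub>R One + l *\<^sub>R One = x + (l/2) *\<^sub>R One"
    by (simp add: euclidean_eq_iff[where 'a='a] inner_add_left inner_diff_left)
  then show ?thesis by (simp only: centred_cube_def)
qed

lemma is_cube_centred_cube: "0 < (l::real) \<Longrightarrow> is_cube (centred_cube x l) l"
  unfolding is_cube_def centred_cube_eq_box by blast

lemma centre_in_centred_cube: "0 < (l::real) \<Longrightarrow> x \<in> centred_cube x l"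
  by (simp add: centred_cube_def mem_box inner_add_left inner_diff_left)

lemma is_cube_nonempty: "is_cube Q l \<Longrightarrow> Q \<noteq> {}"
  by (auto simp: is_cube_def box_eq_empty inner_add_left)

lemma measure_is_cube:
  fixes Q :: "'a::euclidean_space set"
  assumes "is_cube Q l"
  shows "measure lebesgue Q = l ^ DIM('a)"
  using assms by (auto simp: is_cube_def inner_add_left prod_constant)

lemma is_cube_dist_le:
  fixes Q :: "'a::euclidean_space set" and l :: real
  assumes "is_cube Q l" "u \<in> Q" "v \<in> Q"
  shows "dist u v \<le> DIM('a) * l"
proof -
  obtain a where Q: "Q = box a (a + l *\<^sub>R One)" using assms(1) is_cube_def by blast
  have "dist u v \<le> (\<Sum>b\<in>Basis. \<bar>(u - v) \<bullet> b\<bar>)" by (simp add: dist_norm norm_le_l1)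
  also have "\<dots> \<le> (\<Sum>b\<in>(Basis::'a set). l)"
  proof (rule sum_mono)
    fix b :: 'a assume "b \<in> Basis"
    then have "a \<bullet> b < u \<bullet> b" "u \<bullet> b < a \<bullet> b + l" "a \<bullet> b < v \<bullet> b" "v \<bullet> b < a \<bullet> b + l"
      using assms Q by (auto simp: mem_box inner_add_left)
    then show "\<bar>(u - v) \<bullet> b\<bar> \<le> l" by (simp add: inner_diff_left abs_le_iff)
  qed
  finally show ?thesis by simp
qed

lemma centred_cube_subset_ball:
  fixes y :: "'a::euclidean_space" and l :: real
  shows "centred_cube y l \<subseteq> ball y (DIM('a) * l / 2)"
proof
  fix u assume u: "u \<in> centred_cube y l"
  have "dist y u \<le> (\<Sum>b\<in>Basis. \<bar>(y - u) \<bullet> b\<bar>)" by (simp add: dist_norm norm_le_l1)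
  also have "\<dots> < (\<Sum>b\<in>(Basis::'a set). l / 2)"
  proof (rule sum_strict_mono)
    fix b :: 'a assume "b \<in> Basis"
    with u have "y \<bullet> b - l / 2 < u \<bullet> b" "u \<bullet> b < y \<bullet> b + l / 2"
      by (auto simp: centred_cube_def mem_box inner_add_left inner_diff_left)
    then show "\<bar>(y - u) \<bullet> b\<bar> < l / 2" unfolding inner_diff_left by arith
  qed auto
  finally show "u \<in> ball y (DIM('a) * l / 2)" by simp
qed

lemma ball_subset_centred_cube:
  fixes x :: "'a::euclidean_space"
  assumes "r \<le> l/2"
  shows "ball x r \<subseteq> centred_cube x l"
proof
  fix u assume u: "u \<in> ball x r"
  have "x \<bullet> b - l/2 < u \<bullet> b \<and> u \<bullet> b < x \<bullet> b + l/2" if "b \<in> Basis" for b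
  proof -
    have "\<bar>(u - x) \<bullet> b\<bar> \<le> norm (u - x)" using that Basis_le_norm by blast
    also have "\<dots> < r" using u by (simp add: dist_norm norm_minus_commute)
    finally show ?thesis using assms unfolding inner_diff_left by arith
  qed
  then show "u \<in> centred_cube x l"
    by (simp add: centred_cube_def mem_box inner_add_left inner_diff_left)
qed

lemma power_DIM_le_measure_if_cube_subset:
  fixes Q :: "'a::euclidean_space set"
  assumes "is_cube Q s" "Q \<subseteq> A" "A \<in> fmeasurable lebesgue"
  shows "s ^ DIM('a) \<le> measure lebesgue A"
proof -
  have "Q \<in> sets lebesgue" using assms(1) by (auto simp: is_cube_def)
  then have "measure lebesgue Q \<le> measure lebesgue A"
    using measure_mono_fmeasurable assms(2,3) by blast
  then show ?thesis using measure_is_cube[OF assms(1)] by simp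
qed

lemma exists_dyadic_scale:
  fixes r :: real
  assumes "0 < r" "r < 1"
  obtains j :: nat where "1 / 2^j \<le> r" "r < 2 / 2^j"
proof -
  obtain k :: nat where "(1/2::real)^k < r" using real_arch_pow_inv[OF assms(1), of "1/2"] by auto
  then have ex: "1/2^k \<le> r" by (simp add: power_divide)
  define j where "j = (LEAST j::nat. 1/2^j \<le> r)"
  have j: "1/2^j \<le> r" unfolding j_def by (rule LeastI[of _ k]) (rule ex)
  then obtain i where i: "j = Suc i" using assms by (cases j) auto
  have "\<not> 1/2^i \<le> r"
  proof
    assume "1/2^i \<le> r"
    then have "j \<le> i" unfolding j_def by (rule Least_le)
    then show False using i by simp
  qed
  then have "r < 2/2^j" using i by simp
  with j show ?thesis using that by blast
qed

lemma ball_disjoint_frontier_cases: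
  fixes \<Omega> :: "'a::euclidean_space set"
  assumes "ball y e \<inter> frontier \<Omega> = {}"
  shows "ball y e \<subseteq> \<Omega> \<or> ball y e \<subseteq> - \<Omega>"
  using connected_Int_frontier[of "ball y e" \<Omega>] assms by auto

lemma setdist_ge_if_ball_disjoint:
  fixes A S :: "'a::metric_space set"
  assumes "A \<subseteq> ball y a" "ball y b \<inter> S = {}" "A \<noteq> {}" "S \<noteq> {}"
  shows "b - a \<le> setdist A S"
proof (rule le_setdistI)
  fix p z assume "p \<in> A" "z \<in> S"
  then have "dist y p < a" "z \<notin> ball y b" using assms(1,2) by auto
  then show "b - a \<le> dist p z" using dist_triangle[of y z p] by simp
qed (use assms in auto)

lemma subset_ball_if_setdist_less:
  fixes A B :: "'a::metric_space set"
  assumes "A \<subseteq> ball z a" "A \<noteq> {}" "B \<noteq> {}" "setdist A B < e"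
    and "\<And>u v. u \<in> B \<Longrightarrow> v \<in> B \<Longrightarrow> dist u v \<le> D"
  shows "B \<subseteq> ball z (a + e + D)"
proof
  obtain p q where "p \<in> A" "q \<in> B" "dist p q < e"
    using setdist_ltE[OF assms(4)] assms(2,3) by blast
  fix w assume "w \<in> B"
  then have "dist z w < a + e + D"
    using \<open>p \<in> A\<close> \<open>q \<in> B\<close> \<open>dist p q < e\<close> assms(1) assms(5)[of q w]
      dist_triangle[of z w p] dist_triangle[of p w q] by auto
  then show "w \<in> ball z (a + e + D)" by simp
qed

lemma interior_regularI_cubes:
  fixes \<Omega> :: "'a::euclidean_space set"
  assumes "domain \<Omega>" "m > 0" "R \<ge> 1"
    and cubes: "\<And>x r. x \<in> frontier \<Omega> \<Longrightarrow> 0 < r \<Longrightarrow> r < 1 \<Longrightarrow>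
      \<exists>Q s. is_cube Q s \<and> Q \<subseteq> \<Omega> \<inter> ball x (R * r) \<and> m * r \<le> s"
  shows "interior_regular \<Omega>"
proof -
  define c where "c = (m / (2 * R)) ^ DIM('a)"
  have "c * measure lebesgue (centred_cube x l) \<le> measure lebesgue (\<Omega> \<inter> centred_cube x l)"
    if x: "x \<in> frontier \<Omega>" and l: "0 < l" "l \<le> 1" for x l
  proof -
    define r where "r = l / (2 * R)"
    have r: "0 < r" "r < 1" "R * r = l / 2" using l assms(3) by (auto simp: r_def field_simps)
    then obtain Q s where Q: "is_cube Q s" "Q \<subseteq> \<Omega> \<inter> ball x (l / 2)" and "m * r \<le> s"
      using cubes[OF x r(1,2)] unfolding r(3) by blast
    then have "c * l ^ DIM('a) \<le> s ^ DIM('a)"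
      using assms(2,3) l by (auto simp: c_def r_def power_mult_distrib[symmetric] intro!: power_mono)
    also have "\<dots> \<le> measure lebesgue (\<Omega> \<inter> centred_cube x l)"
    proof (rule power_DIM_le_measure_if_cube_subset[OF Q(1)])
      show "Q \<subseteq> \<Omega> \<inter> centred_cube x l" using Q(2) ball_subset_centred_cube[of "l/2" l x] by auto
      show "\<Omega> \<inter> centred_cube x l \<in> fmeasurable lebesgue"
        using assms(1) by (intro bounded_set_imp_lmeasurable bounded_Int)
          (auto simp: domain_def centred_cube_def)
    qed
    finally show ?thesis using measure_is_cube[OF is_cube_centred_cube[OF l(1), of x]] by simp
  qed
  moreover have "c > 0" using assms(2,3) by (simp add: c_def)
  ultimately show ?thesis using assms(1) unfolding interior_regular_def by blast
qed

text \<open>The part of I-thickness (with \<open>j\<^sub>0 = 0\<close>) that the proof uses: the bound \<open>c\<^sub>7\<close> is dropped.\<close>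

definition interior_partners ::
    "'a::euclidean_space set \<Rightarrow> real \<Rightarrow> real \<Rightarrow> real \<Rightarrow> real \<Rightarrow> real \<Rightarrow> real \<Rightarrow> real \<Rightarrow> bool" where
  "interior_partners \<Omega> c1 c2 c3 c4 c5 c6 c8 \<longleftrightarrow>
    (\<forall>j::nat. \<forall>Qe le. is_cube Qe le \<and> Qe \<subseteq> - \<Omega> \<and> c1 / 2^j \<le> le \<and> le \<le> c2 / 2^j \<and>
       c3 / 2^j \<le> setdist Qe (frontier \<Omega>) \<and> setdist Qe (frontier \<Omega>) \<le> c4 / 2^j \<longrightarrow>
       (\<exists>Qi li. is_cube Qi li \<and> Qi \<subseteq> \<Omega> \<and> c5 / 2^j \<le> li \<and> li \<le> c6 / 2^j \<and>
          setdist Qe Qi \<le> c8 / 2^j))"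

lemma I_thick_interior_partners:
  fixes \<Omega> :: "'a::euclidean_space set"
  assumes "I_thick \<Omega>" "c1 > 0" "c2 > 0" "c3 > 0" "c4 > 0"
  obtains c5 c6 c8 where "c5 > 0" "c6 > 0" "c8 > 0" "interior_partners \<Omega> c1 c2 c3 c4 c5 c6 c8"
proof -
  obtain c5 c6 c7 c8 :: real where "c5 > 0" "c6 > 0" "c8 > 0" and
    thick: "\<forall>j::nat. j \<ge> 0 \<longrightarrow>
         (\<forall>Qe le. is_cube Qe le \<and> Qe \<subseteq> - \<Omega> \<and>
             c1 / 2^j \<le> le \<and> le \<le> c2 / 2^j \<and>
             c3 / 2^j \<le> setdist Qe (frontier \<Omega>) \<and> setdist Qe (frontier \<Omega>) \<le> c4 / 2^j \<longrightarrow>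
           (\<exists>Qi li. is_cube Qi li \<and> Qi \<subseteq> \<Omega> \<and>
             c5 / 2^j \<le> li \<and> li \<le> c6 / 2^j \<and>
             c7 / 2^j \<le> setdist Qi (frontier \<Omega>) \<and>
             setdist Qi (frontier \<Omega>) \<le> setdist Qe Qi \<and>
             setdist Qe Qi \<le> c8 / 2^j))"
    using assms(1)[unfolded I_thick_def, THEN conjunct2, rule_format, OF assms(2-5), of 0]
    by (elim exE conjE) blast
  have "interior_partners \<Omega> c1 c2 c3 c4 c5 c6 c8"
    unfolding interior_partners_def using thick by blast
  with \<open>c5 > 0\<close> \<open>c6 > 0\<close> \<open>c8 > 0\<close> show ?thesis by (rule that)
qed

lemma exterior_cube_in_ball:
  fixes \<Omega> :: "'a::euclidean_space set" and \<eta> r t :: real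
  assumes "0 < \<eta>" "0 < r" "t \<le> r" "r < 2 * t" "x \<in> frontier \<Omega>"
    and y: "ball y (\<eta> * r) \<subseteq> ball x r" "ball y (\<eta> * r) \<inter> frontier \<Omega> = {}"
      "ball y (\<eta> * r) \<subseteq> - \<Omega>"
  defines "Qe \<equiv> centred_cube y (\<eta> * r / (2 * real DIM('a)))"
  shows "is_cube Qe (\<eta> * r / (2 * real DIM('a)))" "Qe \<subseteq> - \<Omega>" "Qe \<subseteq> ball x r"
    "\<eta> / 2 * t \<le> setdist Qe (frontier \<Omega>)" "setdist Qe (frontier \<Omega>) \<le> 2 * t"
proof -
  have "DIM('a) > 0" by simp
  then show "is_cube Qe (\<eta> * r / (2 * real DIM('a)))"
    using assms(1,2) by (simp add: Qe_def is_cube_centred_cube)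
  have "y \<in> Qe" using assms(1,2) by (simp add: Qe_def centre_in_centred_cube)
  have Qe_ball: "Qe \<subseteq> ball y (\<eta> * r / 4)"
    using centred_cube_subset_ball[of y "\<eta> * r / (2 * real DIM('a))"] by (simp add: Qe_def)
  moreover have "ball y (\<eta> * r / 4) \<subseteq> ball y (\<eta> * r)" using assms(1,2) by (intro subset_ball) simp
  ultimately show "Qe \<subseteq> - \<Omega>" "Qe \<subseteq> ball x r" using y by auto
  have "\<eta> / 2 * t \<le> 3 / 4 * (\<eta> * r)" using assms(1-4) by simp
  also have "3 / 4 * (\<eta> * r) \<le> setdist Qe (frontier \<Omega>)"
    using setdist_ge_if_ball_disjoint[OF Qe_ball y(2)] \<open>y \<in> Qe\<close> assms(5) by auto
  finally show "\<eta> / 2 * t \<le> setdist Qe (frontier \<Omega>)" .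
  have "setdist Qe (frontier \<Omega>) \<le> dist y x" using \<open>y \<in> Qe\<close> assms(5) by (rule setdist_le_dist)
  also have "\<dots> < 2 * t" using subsetD[OF y(1), of y] assms(1,2,4) by (simp add: dist_commute)
  finally show "setdist Qe (frontier \<Omega>) \<le> 2 * t" by simp
qed

lemma interior_cube_near_exterior_ball:
  fixes \<Omega> :: "'a::euclidean_space set" and \<eta> r c5 c6 c8 :: real
  assumes thick: "interior_partners \<Omega> (\<eta> / (2 * real DIM('a))) (\<eta> / DIM('a)) (\<eta> / 2) 2 c5 c6 c8"
    and "c5 \<ge> 0" "c6 \<ge> 0" "c8 \<ge> 0" "0 < \<eta>" "0 < r" "r < 1" "x \<in> frontier \<Omega>"
    and y: "ball y (\<eta> * r) \<subseteq> ball x r" "ball y (\<eta> * r) \<inter> frontier \<Omega> = {}"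
      "ball y (\<eta> * r) \<subseteq> - \<Omega>"
  shows "\<exists>Q s. is_cube Q s \<and> Q \<subseteq> \<Omega> \<inter> ball x ((2 + c8 + DIM('a) * c6) * r) \<and> c5 / 2 * r \<le> s"
proof -
  obtain j :: nat where j: "1 / 2^j \<le> r" "r < 2 / 2^j" using exists_dyadic_scale assms(6,7) .
  define t :: real where "t = 1 / 2^j"
  have t: "t > 0" "t \<le> r" "r < 2 * t" and scale: "\<And>a. a / 2^j = a * t" using j by (auto simp: t_def)
  define d :: real where "d = DIM('a)"
  have "d \<ge> 1" using DIM_positive[where 'a='a] by (simp add: d_def)
  define Qe where "Qe = centred_cube y (\<eta> * r / (2 * real DIM('a)))"
  note Qe = exterior_cube_in_ball[OF assms(5,6) t(2,3) assms(8) y, folded Qe_def]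
  have "\<eta> / (2 * d) * t \<le> \<eta> * r / (2 * d)" "\<eta> * r / (2 * d) \<le> \<eta> / d * t"
    using t assms(5) \<open>d \<ge> 1\<close> by (simp_all add: divide_right_mono field_simps)
  then obtain Qi li where Qi: "is_cube Qi li" "Qi \<subseteq> \<Omega>" "c5 * t \<le> li" "li \<le> c6 * t"
      "setdist Qe Qi \<le> c8 * t"
    using thick[unfolded interior_partners_def, rule_format, where j=j and Qe=Qe
        and le="\<eta> * r / (2 * d)"] Qe(1,2) Qe(4,5)[folded scale]
    unfolding scale d_def by blast
  have "Qe \<noteq> {}" "setdist Qe Qi < (c8 + 1) * t"
    using Qe(1) Qi(5) t(1) is_cube_nonempty by (auto simp: distrib_right)
  from subset_ball_if_setdist_less[OF Qe(3) this(1) is_cube_nonempty[OF Qi(1)] this(2)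
      is_cube_dist_le[OF Qi(1)]]
  have "Qi \<subseteq> ball x (r + (c8 + 1) * t + d * li)" by (simp add: d_def)
  also have "\<dots> \<subseteq> ball x ((2 + c8 + d * c6) * r)"
  proof (rule subset_ball)
    have "(c8 + 1) * t \<le> (c8 + 1) * r" using t assms(4) by (intro mult_left_mono) auto
    moreover have "d * li \<le> d * (c6 * r)"
      using Qi(4) t assms(3) \<open>d \<ge> 1\<close> by (intro mult_left_mono order_trans[OF Qi(4)]) auto
    ultimately show "r + (c8 + 1) * t + d * li \<le> (2 + c8 + d * c6) * r"
      using t by (simp add: algebra_simps)
  qed
  moreover have "c5 / 2 * r \<le> li"
    using t assms(2) mult_left_mono[of r "2 * t" c5] by (intro order_trans[OF _ Qi(3)]) simp
  ultimately show ?thesis using Qi(1,2) unfolding d_def by blast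
qed

lemma cube_in_domain_near_frontier:
  fixes \<Omega> :: "'a::euclidean_space set" and \<eta> r c5 c6 c8 :: real
  assumes thick: "interior_partners \<Omega> (\<eta> / (2 * real DIM('a))) (\<eta> / DIM('a)) (\<eta> / 2) 2 c5 c6 c8"
    and ball_cond: "\<And>x r. x \<in> frontier \<Omega> \<Longrightarrow> 0 < r \<Longrightarrow> r < 1 \<Longrightarrow>
      \<exists>y. ball y (\<eta> * r) \<subseteq> ball x r \<and> ball y (\<eta> * r) \<inter> frontier \<Omega> = {}"
    and "c5 \<ge> 0" "c6 \<ge> 0" "c8 \<ge> 0" "0 < \<eta>" "0 < r" "r < 1" "x \<in> frontier \<Omega>"
  shows "\<exists>Q s. is_cube Q s \<and> Q \<subseteq> \<Omega> \<inter> ball x ((2 + c8 + DIM('a) * c6) * r) \<and>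
    min (\<eta> / DIM('a)) (c5 / 2) * r \<le> s"
proof -
  obtain y where y: "ball y (\<eta> * r) \<subseteq> ball x r" "ball y (\<eta> * r) \<inter> frontier \<Omega> = {}"
    using ball_cond assms(7-9) by blast
  consider "ball y (\<eta> * r) \<subseteq> \<Omega>" | "ball y (\<eta> * r) \<subseteq> - \<Omega>"
    using ball_disjoint_frontier_cases[OF y(2)] by blast
  then show ?thesis
  proof cases
    case 1
    define Q where "Q = centred_cube y (\<eta> * r / DIM('a))"
    have "DIM('a) * (\<eta> * r / DIM('a)) / 2 \<le> \<eta> * r" using assms(6,7) by simp
    then have "Q \<subseteq> ball y (\<eta> * r)"
      using centred_cube_subset_ball[of y "\<eta> * r / DIM('a)"] unfolding Q_def by auto
    moreover have "ball x r \<subseteq> ball x ((2 + c8 + DIM('a) * c6) * r)"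
      using assms(4,5,7) by (intro subset_ball) (simp add: algebra_simps)
    ultimately have "Q \<subseteq> \<Omega> \<inter> ball x ((2 + c8 + DIM('a) * c6) * r)" using 1 y(1) by blast
    moreover have "is_cube Q (\<eta> * r / DIM('a))"
      using assms(6,7) by (simp add: Q_def is_cube_centred_cube)
    moreover have "min (\<eta> / DIM('a)) (c5 / 2) * r \<le> \<eta> * r / DIM('a)"
      using assms(7) mult_right_mono[of "min (\<eta> / DIM('a)) (c5 / 2)" "\<eta> / DIM('a)" r] by simp
    ultimately show ?thesis by blast
  next
    case 2
    then obtain Q s where "is_cube Q s" "Q \<subseteq> \<Omega> \<inter> ball x ((2 + c8 + DIM('a) * c6) * r)"
        "c5 / 2 * r \<le> s"
      using interior_cube_near_exterior_ball[OF thick assms(3-9) y] by blast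
    moreover have "min (\<eta> / DIM('a)) (c5 / 2) * r \<le> c5 / 2 * r"
      using assms(7) by (intro mult_right_mono min.cobounded2) simp
    ultimately show ?thesis by (meson order_trans)
  qed
qed

theorem proposition5p10:
  fixes \<Omega> :: "'a::euclidean_space set"
  assumes "domain \<Omega>" and "I_thick \<Omega>" and "ball_condition (frontier \<Omega>)"
  shows "interior_regular \<Omega>"
proof -
  obtain \<eta> :: real where \<eta>: "0 < \<eta>" and ball_cond: "\<And>x r. x \<in> frontier \<Omega> \<Longrightarrow> 0 < r \<Longrightarrow> r < 1 \<Longrightarrow>
      \<exists>y. ball y (\<eta> * r) \<subseteq> ball x r \<and> ball y (\<eta> * r) \<inter> frontier \<Omega> = {}"
    using assms(3) unfolding ball_condition_def by blast
  obtain c5 c6 c8 where c: "c5 > 0" "c6 > 0" "c8 > 0"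
    and thick: "interior_partners \<Omega> (\<eta> / (2 * real DIM('a))) (\<eta> / DIM('a)) (\<eta> / 2) 2 c5 c6 c8"
    using I_thick_interior_partners[OF assms(2), of "\<eta> / (2 * real DIM('a))" "\<eta> / DIM('a)" "\<eta> / 2" 2]
      \<eta> by auto
  show ?thesis
  proof (rule interior_regularI_cubes[OF assms(1)])
    show "min (\<eta> / DIM('a)) (c5 / 2) > 0" using \<eta> c by simp
    show "2 + c8 + DIM('a) * c6 \<ge> 1" using c by simp
  qed (use cube_in_domain_near_frontier[OF thick ball_cond] c \<eta> in auto)
qed

end
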